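(* The function $\gamma(p)=\dfrac{p^2}{\log(e-\log p)}$ is increasing and convex on the interval $(0,1)$. *)

theory Defs
  imports "HOL-Analysis.Analysis"
begin

definition gamma_fun :: "real \<Rightarrow> real" where
  "gamma_fun p = p\<^sup>2 / ln (exp 1 - ln p)"

end

theory Submission
  imports Defs
begin

text \<open>With \<open>u = e - ln p\<close> one computes
  \<open>\<gamma>'(p) = p (2 / ln u + 1 / (u (ln u)\<^sup>2))\<close>.
  On \<open>(0,1)\<close> we have \<open>u > 1\<close>, so \<open>ln u > 0\<close> and \<open>\<gamma>' > 0\<close>; moreover \<open>u\<close> decreases in \<open>p\<close>,
  so both summands in the bracket increase, and \<open>\<gamma>'\<close>, a product of two positive increasing
  factors, is increasing.\<close>

lemma strict_mono_on_realI:
  fixes f f' :: "real \<Rightarrow> real"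
  assumes "connected A"
    and deriv: "\<And>x. x \<in> A \<Longrightarrow> (f has_real_derivative f' x) (at x)"
    and pos: "\<And>x. x \<in> A \<Longrightarrow> 0 < f' x"
  shows "strict_mono_on A f"
proof (rule strict_mono_onI)
  fix x y assume "x \<in> A" "y \<in> A" "x < y"
  then have Icc: "{x..y} \<subseteq> A"
    using \<open>connected A\<close> connected_contains_Icc by blast
  show "f x < f y"
  proof (rule DERIV_pos_imp_increasing_open[OF \<open>x < y\<close>])
    fix t assume "x < t" "t < y"
    then have "t \<in> A" using Icc by auto
    then show "\<exists>d. (f has_real_derivative d) (at t) \<and> 0 < d"
      using deriv pos by blast
  next
    show "continuous_on {x..y} f"
      using Icc deriv by (intro continuous_at_imp_continuous_on) (auto intro: DERIV_isCont)
  qed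
qed

definition log_weight :: "real \<Rightarrow> real" where
  "log_weight u = 2 / ln u + 1 / (u * (ln u)\<^sup>2)"

lemma log_weight_pos: "1 < u \<Longrightarrow> 0 < log_weight u"
  unfolding log_weight_def by (simp add: add_pos_pos)

lemma log_weight_antimono:
  assumes "1 < u" "u \<le> v"
  shows "log_weight v \<le> log_weight u"
proof -
  have ln_pos: "0 < ln u" and ln_le: "ln u \<le> ln v"
    using assms by auto
  have "2 / ln v \<le> 2 / ln u"
    using ln_pos ln_le by (simp add: frac_le)
  moreover have "u * (ln u)\<^sup>2 \<le> v * (ln v)\<^sup>2"
    using assms ln_pos ln_le by (intro mult_mono power_mono) auto
  then have "1 / (v * (ln v)\<^sup>2) \<le> 1 / (u * (ln u)\<^sup>2)"
    using assms ln_pos by (intro divide_left_mono) auto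
  ultimately show ?thesis
    unfolding log_weight_def by linarith
qed

lemma one_less_exp_1_minus_ln:
  fixes p :: real
  assumes "0 < p" "p < 1"
  shows "1 < exp 1 - ln p"
proof -
  have "ln p < 0"
    using assms by simp
  then show ?thesis
    using exp_gt_one[of 1] by linarith
qed

definition gamma_deriv :: "real \<Rightarrow> real" where
  "gamma_deriv p = p * log_weight (exp 1 - ln p)"

lemma gamma_fun_has_real_derivative:
  assumes "0 < p" "p < 1"
  shows "(gamma_fun has_real_derivative gamma_deriv p) (at p)"
proof -
  define u where "u = exp 1 - ln p"
  have "1 < u"
    using one_less_exp_1_minus_ln[OF assms] by (simp add: u_def)
  then have u_pos: "0 < u" and ln_u_pos: "0 < ln u"
    by auto
  have "(gamma_fun has_real_derivative
      (2 * p * ln u - p\<^sup>2 * (- (1 / p) / u)) / (ln u)\<^sup>2) (at p)"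
    unfolding gamma_fun_def[abs_def] u_def
    using assms u_pos[unfolded u_def] ln_u_pos[unfolded u_def]
    by (auto intro!: derivative_eq_intros simp: power2_eq_square)
  also have "(2 * p * ln u - p\<^sup>2 * (- (1 / p) / u)) / (ln u)\<^sup>2 = gamma_deriv p"
    unfolding gamma_deriv_def log_weight_def u_def[symmetric]
    using assms u_pos ln_u_pos by (simp add: field_simps power2_eq_square)
  finally show ?thesis .
qed

lemma gamma_deriv_pos: "0 < p \<Longrightarrow> p < 1 \<Longrightarrow> 0 < gamma_deriv p"
  unfolding gamma_deriv_def by (simp add: log_weight_pos one_less_exp_1_minus_ln)

lemma gamma_deriv_mono:
  assumes "0 < x" "x \<le> y" "y < 1"
  shows "gamma_deriv x \<le> gamma_deriv y"
proof -
  have "exp 1 - ln y \<le> exp 1 - ln x"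
    using assms by simp
  then have "log_weight (exp 1 - ln x) \<le> log_weight (exp 1 - ln y)"
    using assms by (intro log_weight_antimono one_less_exp_1_minus_ln) auto
  moreover have "0 \<le> log_weight (exp 1 - ln x)"
    using assms by (intro less_imp_le log_weight_pos one_less_exp_1_minus_ln) auto
  ultimately show ?thesis
    unfolding gamma_deriv_def using assms by (intro mult_mono) auto
qed

theorem lemma26:
  shows "strict_mono_on {0<..<1} gamma_fun \<and> convex_on {0<..<1} gamma_fun"
proof
  show "strict_mono_on {0<..<1} gamma_fun"
    by (rule strict_mono_on_realI[where f' = gamma_deriv])
      (auto intro: gamma_fun_has_real_derivative gamma_deriv_pos)
  show "convex_on {0<..<1} gamma_fun"
    by (rule convex_on_realI[where f' = gamma_deriv])
      (auto intro: gamma_fun_has_real_derivative gamma_deriv_mono)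
qed

end
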